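(* For real $m,p>-1$, $$\int_{0}^{1}\frac{x^m-x^p}{(x^{m+1}+1)(x^{p+1}+1)\log x}\,dx=\frac12\log\!\left(\frac{m+1}{p+1}\right).$$ *)

theory Defs
  imports "HOL-Analysis.Analysis"
begin

end

theory Submission
  imports Defs
begin

(* With a = m + 1, b = p + 1 and w y = 1 / (1 + y) the integrand is (w (x^b) - w (x^a)) / (x ln x),
   a Frullani integral in multiplicative form (x = exp (-t) turns it into the classical one).
   If G' = w y / (y ln y) on (0,1), then G (x^b) - G (x^a) is an antiderivative of the integrand,
   since dy / (y ln y) is invariant under y = x^c.  Comparing G with ln (- ln y), an antiderivative
   of 1 / (y ln y), traps G (x^b) - G (x^a) between w (x^a) ln (b/a) and w (x^b) ln (b/a); hence it
   tends to w 0 ln (b/a) at 0 and to w 1 ln (b/a) at 1, and the integral is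
   (w 1 - w 0) ln (b/a) = 1/2 ln (a/b). *)

lemma DERIV_weighted_bounds:
  fixes G L w l :: "real \<Rightarrow> real"
  assumes "u \<le> v"
    and G: "\<And>y. y \<in> {u..v} \<Longrightarrow> (G has_real_derivative w y * l y) (at y)"
    and L: "\<And>y. y \<in> {u..v} \<Longrightarrow> (L has_real_derivative l y) (at y)"
    and l_nonpos: "\<And>y. y \<in> {u..v} \<Longrightarrow> l y \<le> 0"
    and w_antimono: "\<And>y z. u \<le> y \<Longrightarrow> y \<le> z \<Longrightarrow> z \<le> v \<Longrightarrow> w z \<le> w y"
  shows "w u * (L v - L u) \<le> G v - G u" and "G v - G u \<le> w v * (L v - L u)"
proof -
  have "(\<lambda>y. G y - w u * L y) u \<le> (\<lambda>y. G y - w u * L y) v"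
  proof (rule deriv_nonneg_imp_mono[OF _ _ \<open>u \<le> v\<close>])
    fix y assume y: "y \<in> {u..v}"
    show "((\<lambda>y. G y - w u * L y) has_real_derivative (w y - w u) * l y) (at y)"
      using DERIV_diff[OF G[OF y] DERIV_cmult[OF L[OF y]]] by (simp add: left_diff_distrib)
    show "0 \<le> (w y - w u) * l y"
      using y w_antimono[of u y] l_nonpos[OF y] by (intro mult_nonpos_nonpos) auto
  qed
  then show "w u * (L v - L u) \<le> G v - G u" by (simp add: algebra_simps)
  have "(\<lambda>y. w v * L y - G y) u \<le> (\<lambda>y. w v * L y - G y) v"
  proof (rule deriv_nonneg_imp_mono[OF _ _ \<open>u \<le> v\<close>])
    fix y assume y: "y \<in> {u..v}"
    show "((\<lambda>y. w v * L y - G y) has_real_derivative (w v - w y) * l y) (at y)"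
      using DERIV_diff[OF DERIV_cmult[OF L[OF y]] G[OF y]] by (simp add: left_diff_distrib)
    show "0 \<le> (w v - w y) * l y"
      using y w_antimono[of y v] l_nonpos[OF y] by (intro mult_nonpos_nonpos) auto
  qed
  then show "G v - G u \<le> w v * (L v - L u)" by (simp add: algebra_simps)
qed

lemma has_integral_open_interval_FTC_nonneg:
  fixes F f :: "real \<Rightarrow> real"
  assumes "a < b"
    and F: "\<And>x. a < x \<Longrightarrow> x < b \<Longrightarrow> (F has_real_derivative f x) (at x)"
    and f_cont: "\<And>x. a < x \<Longrightarrow> x < b \<Longrightarrow> isCont f x"
    and f_nonneg: "\<And>x. a < x \<Longrightarrow> x < b \<Longrightarrow> 0 \<le> f x"
    and A: "(F \<longlongrightarrow> A) (at_right a)"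
    and B: "(F \<longlongrightarrow> B) (at_left b)"
  shows "(f has_integral B - A) {a<..<b}"
proof -
  have "set_integrable lborel (einterval a b) f" "(LBINT x=ereal a..ereal b. f x) = B - A"
    using assms
    by (intro interval_integral_FTC_nonneg AE_I2; force simp: ereal_tendsto_simps1)+
  then have "set_integrable lborel {a<..<b} f" "(LINT x:{a<..<b}|lborel. f x) = B - A"
    using \<open>a < b\<close> by (simp_all add: interval_lebesgue_integral_def einterval_eq)
  then show ?thesis
    by (metis has_integral_integral set_borel_integral_eq_integral)
qed

lemma tendsto_comp_powr_at_right_0:
  fixes w :: "real \<Rightarrow> real"
  assumes "continuous_on {0..1} w" "0 < d"
  shows "((\<lambda>x. w (x powr d)) \<longlongrightarrow> w 0) (at_right 0)"
proof (rule continuous_on_tendsto_compose[OF assms(1)])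
  show "((\<lambda>x::real. x powr d) \<longlongrightarrow> 0) (at_right 0)"
    by (rule tendsto_zero_powrI[OF tendsto_ident_at tendsto_const _ \<open>0 < d\<close>])
       (auto simp: eventually_at_right_field intro: exI[of _ 1])
  show "\<forall>\<^sub>F x in at_right 0. x powr d \<in> {0..1}"
    using \<open>0 < d\<close> by (auto simp: eventually_at_right_field intro!: exI[of _ 1] powr_le1)
qed simp

lemma tendsto_comp_powr_at_left_1:
  fixes w :: "real \<Rightarrow> real"
  assumes "continuous_on {0..1} w" "0 < d"
  shows "((\<lambda>x. w (x powr d)) \<longlongrightarrow> w 1) (at_left 1)"
proof (rule continuous_on_tendsto_compose[OF assms(1)])
  have "((\<lambda>x::real. x powr d) \<longlongrightarrow> 1 powr d) (at_left 1)"
    by (rule tendsto_powr[OF tendsto_ident_at tendsto_const]) auto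
  then show "((\<lambda>x::real. x powr d) \<longlongrightarrow> 1) (at_left 1)" by simp
  show "\<forall>\<^sub>F x in at_left 1. x powr d \<in> {0..1}"
    using \<open>0 < d\<close> by (auto simp: eventually_at_left_field intro!: exI[of _ 0] powr_le1)
qed simp

lemma DERIV_comp_powr_log_weight:
  fixes G w :: "real \<Rightarrow> real"
  assumes G: "\<And>y. 0 < y \<Longrightarrow> y < 1 \<Longrightarrow> (G has_real_derivative w y * (1 / (y * ln y))) (at y)"
    and "0 < x" "x < 1" "0 < c"
  shows "((\<lambda>x. G (x powr c)) has_real_derivative w (x powr c) / (x * ln x)) (at x)"
proof -
  have xc: "0 < x powr c" "x powr c < 1"
    using assms(2-4) powr_less_mono2[of c x 1] by auto
  have "((\<lambda>x. G (x powr c)) has_real_derivative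
          w (x powr c) * (1 / (x powr c * ln (x powr c))) * (c * x powr (c - 1))) (at x)"
    by (rule DERIV_chain2[OF G[OF xc] has_real_derivative_powr[OF \<open>0 < x\<close>]])
  moreover have "ln x \<noteq> 0" using assms(2,3) by simp
  ultimately show ?thesis
    using xc \<open>0 < x\<close> \<open>0 < c\<close> by (simp add: ln_powr powr_diff field_simps)
qed

lemma antiderivative_log_weight_powr_bounds:
  fixes G w :: "real \<Rightarrow> real"
  assumes G: "\<And>y. 0 < y \<Longrightarrow> y < 1 \<Longrightarrow> (G has_real_derivative w y * (1 / (y * ln y))) (at y)"
    and w_antimono: "\<And>y z. 0 \<le> y \<Longrightarrow> y \<le> z \<Longrightarrow> z \<le> 1 \<Longrightarrow> w z \<le> w y"
    and "0 < b" "b \<le> a" "0 < x" "x < 1"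
  shows "w (x powr a) * ln (b / a) \<le> G (x powr b) - G (x powr a)"
    and "G (x powr b) - G (x powr a) \<le> w (x powr b) * ln (b / a)"
proof -
  define L where "L y = ln (- ln y)" for y :: real
  have L: "(L has_real_derivative 1 / (y * ln y)) (at y)" if "0 < y" "y < 1" for y
    using that unfolding L_def by (auto intro!: derivative_eq_intros simp: field_simps)
  have L_powr: "L (x powr d) = ln d + ln (- ln x)" if "0 < d" for d
    using that \<open>0 < x\<close> \<open>x < 1\<close> ln_mult[of d "- ln x"] by (simp add: L_def ln_powr)
  have "L (x powr b) - L (x powr a) = ln (b / a)"
    using assms(3,4) by (simp add: L_powr ln_div)
  moreover have ab: "x powr a \<le> x powr b" "0 < x powr a" "x powr b < 1"
    using assms(3-6) powr_less_mono2[of b x 1] by (auto intro: powr_mono')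
  moreover have "0 < y \<and> y < 1" if "y \<in> {x powr a..x powr b}" for y
    using that ab unfolding atLeastAtMost_iff by linarith
  moreover have "1 / (y * ln y) \<le> 0" if "0 < y" "y < 1" for y :: real
    using that by (simp add: mult_nonneg_nonpos)
  ultimately show "w (x powr a) * ln (b / a) \<le> G (x powr b) - G (x powr a)"
    and "G (x powr b) - G (x powr a) \<le> w (x powr b) * ln (b / a)"
    using DERIV_weighted_bounds[of "x powr a" "x powr b" G w "\<lambda>y. 1 / (y * ln y)" L] G L w_antimono
    by (smt (verit) atLeastAtMost_iff)+
qed

lemma frullani_powr_ordered:
  fixes w :: "real \<Rightarrow> real"
  assumes w_cont: "continuous_on {0..1} w"
    and w_antimono: "\<And>y z. 0 \<le> y \<Longrightarrow> y \<le> z \<Longrightarrow> z \<le> 1 \<Longrightarrow> w z \<le> w y"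
    and "0 < b" "b \<le> a"
  shows "((\<lambda>x. (w (x powr b) - w (x powr a)) / (x * ln x))
           has_integral (w 1 - w 0) * ln (b / a)) {0<..<1}"
proof -
  have "0 < a" using assms by linarith
  have w_isCont: "isCont w y" if "0 < y" "y < 1" for y
    using w_cont that by (auto intro: continuous_on_interior)
  obtain G where G: "\<And>y. 0 < y \<Longrightarrow> y < 1 \<Longrightarrow> (G has_real_derivative w y * (1 / (y * ln y))) (at y)"
  proof -
    have "\<exists>G. \<forall>y::real. ereal 0 < y \<longrightarrow> y < ereal 1 \<longrightarrow>
            (G has_vector_derivative w y * (1 / (y * ln y))) (at y)"
      using w_isCont by (intro einterval_antiderivative) (auto intro!: continuous_intros)
    then show ?thesis
      using that by (auto simp: has_real_derivative_iff_has_vector_derivative)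
  qed
  define c where "c = ln (b / a)"
  define F where "F = (\<lambda>x. G (x powr b) - G (x powr a))"
  have F_lim: "(F \<longlongrightarrow> w t * c) flt"
    if near: "\<forall>\<^sub>F x in flt. 0 < x \<and> x < 1"
      and w_lim: "\<And>d. 0 < d \<Longrightarrow> ((\<lambda>x. w (x powr d)) \<longlongrightarrow> w t) flt" for flt t
  proof (rule tendsto_sandwich)
    show "\<forall>\<^sub>F x in flt. w (x powr a) * c \<le> F x" "\<forall>\<^sub>F x in flt. F x \<le> w (x powr b) * c"
      using near antiderivative_log_weight_powr_bounds[OF G w_antimono \<open>0 < b\<close> \<open>b \<le> a\<close>]
      by (auto elim!: eventually_mono simp: F_def c_def)
    show "((\<lambda>x. w (x powr a) * c) \<longlongrightarrow> w t * c) flt" "((\<lambda>x. w (x powr b) * c) \<longlongrightarrow> w t * c) flt"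
      using w_lim[OF \<open>0 < a\<close>] w_lim[OF \<open>0 < b\<close>] by (auto intro: tendsto_mult_right)
  qed
  have "((\<lambda>x. (w (x powr b) - w (x powr a)) / (x * ln x)) has_integral w 1 * c - w 0 * c) {0<..<1}"
  proof (rule has_integral_open_interval_FTC_nonneg[of 0 1 F])
    fix x :: real assume x: "0 < x" "x < 1"
    show "(F has_real_derivative (w (x powr b) - w (x powr a)) / (x * ln x)) (at x)"
      using DERIV_diff[OF DERIV_comp_powr_log_weight[OF G x \<open>0 < b\<close>]
                          DERIV_comp_powr_log_weight[OF G x \<open>0 < a\<close>]]
      by (simp add: F_def diff_divide_distrib)
    have "isCont (\<lambda>x. w (x powr d)) x" if "0 < d" for d
    proof (rule isCont_o2[OF _ w_isCont])
      show "isCont (\<lambda>x. x powr d) x" using x by (intro continuous_intros) auto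
      show "0 < x powr d" "x powr d < 1" using x that powr_less_mono2[of d x 1] by auto
    qed
    then show "isCont (\<lambda>x. (w (x powr b) - w (x powr a)) / (x * ln x)) x"
      using x \<open>0 < a\<close> \<open>0 < b\<close> by (intro continuous_intros) auto
    have "w (x powr b) \<le> w (x powr a)"
      using x \<open>0 < b\<close> \<open>b \<le> a\<close> by (intro w_antimono) (auto intro: powr_mono' powr_le1)
    moreover have "x * ln x < 0" using x by (intro mult_pos_neg) auto
    ultimately show "0 \<le> (w (x powr b) - w (x powr a)) / (x * ln x)"
      by (intro divide_nonpos_neg) auto
  next
    show "(F \<longlongrightarrow> w 0 * c) (at_right 0)"
      by (intro F_lim tendsto_comp_powr_at_right_0 w_cont)
         (auto simp: eventually_at_right_field intro: exI[of _ 1])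
    show "(F \<longlongrightarrow> w 1 * c) (at_left 1)"
      by (intro F_lim tendsto_comp_powr_at_left_1 w_cont)
         (auto simp: eventually_at_left_field intro: exI[of _ 0])
  qed simp
  then show ?thesis by (simp add: c_def left_diff_distrib)
qed

lemma frullani_powr:
  fixes w :: "real \<Rightarrow> real"
  assumes w_cont: "continuous_on {0..1} w"
    and w_antimono: "\<And>y z. 0 \<le> y \<Longrightarrow> y \<le> z \<Longrightarrow> z \<le> 1 \<Longrightarrow> w z \<le> w y"
    and "0 < a" "0 < b"
  shows "((\<lambda>x. (w (x powr b) - w (x powr a)) / (x * ln x))
           has_integral (w 1 - w 0) * ln (b / a)) {0<..<1}"
proof (cases "b \<le> a")
  case True
  then show ?thesis using frullani_powr_ordered[OF w_cont w_antimono] \<open>0 < b\<close> by blast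
next
  case False
  have "((\<lambda>x. - ((w (x powr a) - w (x powr b)) / (x * ln x)))
          has_integral - ((w 1 - w 0) * ln (a / b))) {0<..<1}"
    using False \<open>0 < a\<close>
    by (intro has_integral_neg frullani_powr_ordered[OF w_cont w_antimono]) auto
  moreover have "- ((w 1 - w 0) * ln (a / b)) = (w 1 - w 0) * ln (b / a)"
    using \<open>0 < a\<close> \<open>0 < b\<close> by (simp add: ln_div algebra_simps)
  moreover have "- ((w (x powr a) - w (x powr b)) / (x * ln x)) =
      (w (x powr b) - w (x powr a)) / (x * ln x)" for x
    by (simp add: minus_divide_left)
  ultimately show ?thesis by (simp only:)
qed

lemma diff_inverse_one_plus_div:
  fixes A B x l :: real
  assumes "0 \<le> A" "0 \<le> B" "0 < x" "l \<noteq> 0"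
  shows "(1 / (1 + B * x) - 1 / (1 + A * x)) / (x * l) = (A - B) / ((A * x + 1) * (B * x + 1) * l)"
proof -
  have "0 \<le> A * x" "0 \<le> B * x" using assms by simp_all
  then have "1 + A * x \<noteq> 0" "1 + B * x \<noteq> 0" "A * x + 1 \<noteq> 0" "B * x + 1 \<noteq> 0" by linarith+
  then show ?thesis using assms by (simp add: divide_simps) (simp add: algebra_simps)
qed

theorem mainTheorem19:
  fixes m p :: real
  assumes "m > -1" and "p > -1"
  shows "((\<lambda>x. (x powr m - x powr p) /
            ((x powr (m + 1) + 1) * (x powr (p + 1) + 1) * ln x))
          has_integral (1/2) * ln ((m + 1) / (p + 1))) {0<..<1}"
proof -
  define w where "w y = 1 / (1 + y)" for y :: real
  have w_cont: "continuous_on {0..1} w"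
    unfolding w_def by (intro continuous_intros) auto
  have w_antimono: "w z \<le> w y" if "0 \<le> y" "y \<le> z" for y z
    using that unfolding w_def by (intro divide_left_mono) auto
  have integrand: "(w (x powr (p + 1)) - w (x powr (m + 1))) / (x * ln x) =
      (x powr m - x powr p) / ((x powr (m + 1) + 1) * (x powr (p + 1) + 1) * ln x)"
    if "x \<in> {0<..<1}" for x
    using that diff_inverse_one_plus_div[of "x powr m" "x powr p" x "ln x"]
    by (simp add: w_def powr_add)
  have coefficient: "(w 1 - w 0) * ln ((p + 1) / (m + 1)) = (1/2) * ln ((m + 1) / (p + 1))"
    using assms by (simp add: w_def ln_div field_simps)
  have "((\<lambda>x. (w (x powr (p + 1)) - w (x powr (m + 1))) / (x * ln x))
          has_integral (w 1 - w 0) * ln ((p + 1) / (m + 1))) {0<..<1}"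
    using assms w_cont w_antimono by (intro frullani_powr) auto
  then show ?thesis
    by (simp only: coefficient has_integral_cong[OF integrand])
qed

end
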